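(* Consider a parameter-dependent flow on the strip $[x_-,x_+]\times\mathbb R$ satisfying all the standing assumptions in the context, including the monotonicity assumption (M). Fix a solution $x(\tau)$ of $\dot x=f(x)$ with values in $(x_-,x_+)$, and for $\mu\in I$ write the distinguished orbits as $\widetilde{\mathcal W}^\pm_\mu=\{(x(\tau),y^\pm_\mu(\tau)):\tau\in\mathbb R\}$. Then $y^\pm_\mu$ are monotone in $\mu$: if $\mu_1<\mu_2$ then $y^-_{\mu_1}(\tau)\ge y^-_{\mu_2}(\tau)$ and $y^+_{\mu_1}(\tau)\le y^+_{\mu_2}(\tau)$ for all $\tau\in\mathbb R$.
   Context: Let $x_-<x_+$ and consider on the strip $[x_-,x_+]\times\mathbb R$ (universal cover of the cylinder $[x_-,x_+]\times\mathbb S^1$, $\mathbb S^1=\mathbb R/2\pi\mathbb Z$) the family of systems $\dot x=f(x)$, $\dot y=g_\mu(x,y)$, with parameter $\mu$ in an open interval $I\subset\mathbb R$; $f$ is smooth, $g_\mu(x,y)$ is smooth in $(x,y)$, $C^1$ in $\mu$, and $2\pi$-periodic in $y$. Assume $f(x_\pm)=0$, $f>0$ on $(x_-,x_+)$, $f'(x_-)\ge0$, $f'(x_+)\le0$. For each $\mu$ assume: $g_\mu(x_-,y)=0$ iff $y\equiv s_-$ or $y\equiv n_-$ mod $2\pi$, and $g_\mu(x_+,y)=0$ iff $y\equiv s_+$ or $y\equiv n_+$ mod $2\pi$, where $-\pi\le s_-<n_-\le\pi$, $-\pi\le s_+<n_+\le\pi$ (depending on $\mu$); $\partial_yg_\mu(x_-,n_-)>0$,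 $\partial_yg_\mu(x_-,s_-)<0$, $\partial_yg_\mu(x_+,n_+)<0$, $\partial_yg_\mu(x_+,s_+)>0$; $s_--n_-\equiv n_+-s_+$ mod $2\pi$; and the flow has no non-wandering points other than these boundary equilibria and their $2\pi$-translates. Monotonicity assumption (M): $\partial_\mu g_\mu(x,y)\le0$ for all $(x,y)$ and $\mu$. Let $\tilde S_-=(x_-,s_-)$ and $\tilde S_+=(x_+,s_+)$. The distinguished orbit $\widetilde{\mathcal W}^-_\mu$ is the unique orbit in the open strip whose $\alpha$-limit is $\tilde S_-$, and $\widetilde{\mathcal W}^+_\mu$ the unique orbit whose $\omega$-limit is $\tilde S_+$. *)

theory Defs
  imports "HOL-Analysis.Analysis"
begin

definition C1_on :: "'a::real_normed_vector set \<Rightarrow> ('a \<Rightarrow> 'b::real_normed_vector) \<Rightarrow> bool" where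
  "C1_on S h \<longleftrightarrow> (\<exists>D :: 'a \<Rightarrow> ('a \<Rightarrow>\<^sub>L 'b).
        (\<forall>p\<in>S. (h has_derivative blinfun_apply (D p)) (at p)) \<and> continuous_on S D)"

text \<open>C-infinity (smooth) on an open set: there is a family of iterated derivatives
  D vs p (the derivative of order length vs at p, applied to the directions vs) such that
  each q \<mapsto> D vs q is Frechet differentiable with derivative v \<mapsto> D (v # vs) p.
  (In finite dimensions this is equivalent to the usual notion of C-infinity.)\<close>
definition smooth_on :: "'a::real_normed_vector set \<Rightarrow> ('a \<Rightarrow> 'b::real_normed_vector) \<Rightarrow> bool" where
  "smooth_on S h \<longleftrightarrow> (\<exists>D :: 'a list \<Rightarrow> 'a \<Rightarrow> 'b.
        (\<forall>p\<in>S. D [] p = h p) \<and>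
        (\<forall>vs. \<forall>p\<in>S. ((\<lambda>q. D vs q) has_derivative (\<lambda>v. D (v # vs) p)) (at p)))"

definition alpha_limit :: "(real \<Rightarrow> 'a::topological_space) \<Rightarrow> 'a set" where
  "alpha_limit z = {p. \<exists>t::nat \<Rightarrow> real. filterlim t at_bot sequentially \<and> ((\<lambda>n. z (t n)) \<longlonglongrightarrow> p)}"

definition omega_limit :: "(real \<Rightarrow> 'a::topological_space) \<Rightarrow> 'a set" where
  "omega_limit z = {p. \<exists>t::nat \<Rightarrow> real. filterlim t at_top sequentially \<and> ((\<lambda>n. z (t n)) \<longlonglongrightarrow> p)}"

definition nonwandering :: "('a::real_normed_vector \<Rightarrow> 'a) \<Rightarrow> 'a set \<Rightarrow> 'a \<Rightarrow> bool" where
  "nonwandering V S p \<longleftrightarrow> p \<in> S \<and>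
     (\<forall>U. open U \<longrightarrow> p \<in> U \<longrightarrow>
        (\<forall>T. \<exists>t\<ge>T. \<exists>z :: real \<Rightarrow> 'a.
            (\<forall>s\<in>{0..t}. z s \<in> S \<and> (z has_vector_derivative V (z s)) (at s within {0..t}))
            \<and> z 0 \<in> U \<and> z t \<in> U))"

end

theory Submission
  imports Defs
begin

text \<open>Since g decreases in the parameter, for mu1 < mu2 the orbit y2 of the mu2-system is a
  subsolution of the mu1-equation. Both orbits emanate, as tau \<rightarrow> -\<infinity>, from the saddles
  s_-(mu) on the boundary circle x = x_-, and comparing the boundary functions g_mu(x_-, .) gives
  s_-(mu2) \<le> s_-(mu1). If y2 exceeded y1 at some time, a Gronwall estimate would keep y2 > y1 at
  all earlier times, forcing s_-(mu1) = s_-(mu2); but near that saddle g_mu1 is strictly decreasing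
  in y, so the gap y2 - y1 grows backwards in time and cannot tend to 0. The statement about
  omega-limits follows by reversing time and the parameter.\<close>

lemma alpha_limit_reflect: "alpha_limit z = omega_limit (\<lambda>t. z (- t))"
proof (intro set_eqI iffI)
  fix q assume "q \<in> alpha_limit z"
  then obtain t :: "nat \<Rightarrow> real" where "filterlim t at_bot sequentially" "(\<lambda>n. z (t n)) \<longlonglongrightarrow> q"
    unfolding alpha_limit_def by blast
  then show "q \<in> omega_limit (\<lambda>t. z (- t))"
    unfolding omega_limit_def by (auto intro!: exI[of _ "\<lambda>n. - t n"] simp: filterlim_uminus_at_bot)
next
  fix q assume "q \<in> omega_limit (\<lambda>t. z (- t))"
  then obtain t :: "nat \<Rightarrow> real" where "filterlim t at_top sequentially" "(\<lambda>n. z (- t n)) \<longlonglongrightarrow> q"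
    unfolding omega_limit_def by blast
  then show "q \<in> alpha_limit z"
    unfolding alpha_limit_def
    by (auto intro!: exI[of _ "\<lambda>n. - t n"] simp: filterlim_uminus_at_bot[of "\<lambda>n. - t n"])
qed

lemma omega_limit_singleton_imp_tendsto:
  fixes z :: "real \<Rightarrow> 'a::{real_normed_vector, perfect_space, heine_borel}"
  assumes cont: "continuous_on UNIV z" and omega: "omega_limit z = {p}"
  shows "(z \<longlongrightarrow> p) at_top"
proof (rule ccontr)
  assume "\<not> (z \<longlongrightarrow> p) at_top"
  then obtain e where e: "e > 0" "\<not> (\<forall>\<^sub>F t in at_top. dist (z t) p < e)"
    unfolding tendsto_iff by blast
  have far: "\<exists>t\<ge>T. e \<le> dist (z t) p" for T
    using e(2) unfolding eventually_at_top_linorder by (meson not_le)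
  obtain s :: "nat \<Rightarrow> real" where s: "filterlim s at_top sequentially" "(\<lambda>n. z (s n)) \<longlonglongrightarrow> p"
    using omega unfolding omega_limit_def by blast
  \<comment> \<open>the curve keeps coming back near p and leaving again, so it crosses the sphere of radius e
      at arbitrarily late times; a limit point of these crossings is a second omega-limit point\<close>
  have "\<exists>r\<ge>real n. dist (z r) p = e" for n
  proof -
    have "\<forall>\<^sub>F m in sequentially. real n \<le> s m"
      using s(1) by (simp add: filterlim_at_top)
    moreover have "\<forall>\<^sub>F m in sequentially. dist (z (s m)) p < e"
      using s(2) e(1) by (simp add: tendsto_iff)
    ultimately obtain m where m: "real n \<le> s m" "dist (z (s m)) p < e"
      using eventually_happens'[OF sequentially_bot eventually_conj] by blast
    obtain t where t: "s m \<le> t" "e \<le> dist (z t) p"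
      using far by blast
    have "continuous_on {s m..t} (\<lambda>u. dist (z u) p)"
      by (intro continuous_intros continuous_on_subset[OF cont]) auto
    then obtain r where "s m \<le> r" "r \<le> t" "dist (z r) p = e"
      using IVT'[of "\<lambda>u. dist (z u) p" "s m" e t] m t by auto
    then show ?thesis
      using m by (intro exI[of _ r]) auto
  qed
  then obtain r where r: "\<And>n. real n \<le> r n" "\<And>n. z (r n) \<in> sphere p e"
    by (metis dist_commute mem_sphere)
  obtain q \<sigma> where q: "q \<in> sphere p e" "strict_mono \<sigma>" "((\<lambda>n. z (r n)) \<circ> \<sigma>) \<longlonglongrightarrow> q"
    using compact_sphere[of p e] r(2) unfolding compact_eq_seq_compact_metric seq_compact_def by metis
  have "filterlim (r \<circ> \<sigma>) at_top sequentially"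
    using filterlim_compose[OF filterlim_real_sequentially filterlim_subseq[OF q(2)]]
    by (rule filterlim_at_top_mono) (auto simp: r(1))
  then have "q \<in> omega_limit z"
    unfolding omega_limit_def using q(3) by (auto simp: o_def)
  then show False
    using omega q(1) e(1) by simp
qed

lemma alpha_limit_singleton_imp_tendsto:
  fixes z :: "real \<Rightarrow> 'a::{real_normed_vector, perfect_space, heine_borel}"
  assumes "continuous_on UNIV z" "alpha_limit z = {p}"
  shows "(z \<longlongrightarrow> p) at_bot"
proof -
  have "continuous_on UNIV (\<lambda>t. z (- t))"
    by (intro continuous_on_compose2[OF assms(1)] continuous_intros) auto
  then show ?thesis
    using assms(2) omega_limit_singleton_imp_tendsto
    by (simp add: alpha_limit_reflect filterlim_at_bot_mirror)
qed

lemma smooth_on_partial_derivative_snd: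
  fixes h :: "real \<Rightarrow> real \<Rightarrow> real"
  assumes "smooth_on UNIV (\<lambda>p::real \<times> real. h (fst p) (snd p))"
  obtains G where "continuous_on UNIV G" "\<And>a y. (h a has_real_derivative G (a, y)) (at y)"
proof -
  obtain D :: "(real \<times> real) list \<Rightarrow> real \<times> real \<Rightarrow> real" where
    D0: "\<And>p. D [] p = h (fst p) (snd p)" and
    DD: "\<And>vs p. (D vs has_derivative (\<lambda>v. D (v # vs) p)) (at p)"
    using assms unfolding smooth_on_def by blast
  define G where "G p = D [(0, 1)] p" for p
  have "continuous_on UNIV G"
    unfolding G_def by (intro continuous_at_imp_continuous_on ballI has_derivative_continuous[OF DD])
  moreover have "(h a has_real_derivative G (a, y)) (at y)" for a y
  proof -
    have "bounded_linear (\<lambda>v. D [v] (a, y))"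
      using DD[of "[]"] by (rule has_derivative_bounded_linear)
    then have lin: "D [(0, t)] (a, y) = G (a, y) * t" for t
      using linear_cmul[of "\<lambda>v. D [v] (a, y)" t "(0, 1)"] by (simp add: G_def bounded_linear.linear)
    have "((\<lambda>t. (a, t)) has_derivative (\<lambda>t. (0, t))) (at y)"
      by (auto intro!: derivative_eq_intros)
    from has_derivative_compose[OF this DD[of "[]"]]
    show ?thesis
      by (simp add: D0 lin has_field_derivative_def)
  qed
  ultimately show ?thesis using that by blast
qed

lemma C1_on_partial_differentiable_fst:
  fixes g :: "real \<Rightarrow> real \<Rightarrow> real \<Rightarrow> real"
  assumes "C1_on (I \<times> UNIV) (\<lambda>q::real \<times> real \<times> real. g (fst q) (fst (snd q)) (snd (snd q)))"
    and "\<mu> \<in> I"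
  shows "(\<lambda>m. g m a y) differentiable (at \<mu>)"
proof -
  obtain D :: "real \<times> real \<times> real \<Rightarrow> (real \<times> real \<times> real) \<Rightarrow>\<^sub>L real" where
    "((\<lambda>q. g (fst q) (fst (snd q)) (snd (snd q))) has_derivative blinfun_apply (D (\<mu>, a, y))) (at (\<mu>, a, y))"
    using assms unfolding C1_on_def by auto
  moreover have "((\<lambda>m. (m, a, y)) has_derivative (\<lambda>m. (m, 0, 0))) (at \<mu>)"
    by (auto intro!: derivative_eq_intros simp: zero_prod_def)
  ultimately have "((\<lambda>m. g m a y) has_derivative (\<lambda>m. D (\<mu>, a, y) (m, 0, 0))) (at \<mu>)"
    using has_derivative_compose by fastforce
  then show ?thesis
    unfolding differentiable_def by blast
qed

lemma antimono_param_of_deriv_nonpos: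
  fixes g :: "real \<Rightarrow> real \<Rightarrow> real \<Rightarrow> real"
  assumes "C1_on (I \<times> UNIV) (\<lambda>q::real \<times> real \<times> real. g (fst q) (fst (snd q)) (snd (snd q)))"
    and "is_interval I"
    and deriv_nonpos: "\<And>\<mu>. \<mu> \<in> I \<Longrightarrow> deriv (\<lambda>m. g m a y) \<mu> \<le> 0"
    and "\<mu>1 \<in> I" "\<mu>2 \<in> I" "\<mu>1 \<le> \<mu>2"
  shows "g \<mu>2 a y \<le> g \<mu>1 a y"
proof (rule DERIV_nonpos_imp_nonincreasing[OF \<open>\<mu>1 \<le> \<mu>2\<close>])
  fix \<mu> assume "\<mu>1 \<le> \<mu>" "\<mu> \<le> \<mu>2"
  then have "\<mu> \<in> I"
    using assms(2,4,5) unfolding is_interval_1 by blast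
  then have "((\<lambda>m. g m a y) has_real_derivative deriv (\<lambda>m. g m a y) \<mu>) (at \<mu>)"
    using C1_on_partial_differentiable_fst[OF assms(1)] DERIV_deriv_iff_real_differentiable by blast
  then show "\<exists>d. ((\<lambda>m. g m a y) has_real_derivative d) (at \<mu>) \<and> d \<le> 0"
    using deriv_nonpos[OF \<open>\<mu> \<in> I\<close>] by blast
qed

lemma uniform_lipschitz_of_continuous_partial_derivative:
  fixes h :: "real \<Rightarrow> real \<Rightarrow> real"
  assumes "continuous_on UNIV G" "\<And>a y. (h a has_real_derivative G (a, y)) (at y)" "compact K"
  obtains B where "\<And>a u v. a \<in> K \<Longrightarrow> \<bar>u\<bar> \<le> R \<Longrightarrow> \<bar>v\<bar> \<le> R \<Longrightarrow> \<bar>h a u - h a v\<bar> \<le> B * \<bar>u - v\<bar>"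
proof -
  have "compact (G ` (K \<times> {-R..R}))"
    using assms(1,3) by (intro compact_continuous_image compact_Times) (auto intro: continuous_on_subset)
  then obtain B where "\<forall>z \<in> G ` (K \<times> {-R..R}). norm z \<le> B"
    using compact_imp_bounded bounded_iff by blast
  then have B: "\<And>p. p \<in> K \<times> {-R..R} \<Longrightarrow> \<bar>G p\<bar> \<le> B"
    by auto
  have "\<bar>h a u - h a v\<bar> \<le> B * \<bar>u - v\<bar>" if "a \<in> K" "\<bar>u\<bar> \<le> R" "\<bar>v\<bar> \<le> R" for a u v
  proof -
    have "norm (h a u - h a v) \<le> B * norm (u - v)"
      by (rule field_differentiable_bound[of "{-R..R}" _ "\<lambda>y. G (a, y)"])
        (use that B has_field_derivative_at_within[OF assms(2)] in auto)
    then show ?thesis by simp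
  qed
  then show ?thesis
    using that by blast
qed

lemma strict_antimono_near_negative_partial_derivative:
  fixes h :: "real \<Rightarrow> real \<Rightarrow> real"
  assumes "continuous_on UNIV G" "\<And>a y. (h a has_real_derivative G (a, y)) (at y)" "G (a0, s) < 0"
  shows "\<forall>\<^sub>F (a, u, v) in nhds (a0, s, s). u < v \<longrightarrow> h a v < h a u"
proof -
  have "isCont G (a0, s)"
    using assms(1) by (simp add: continuous_on_eq_continuous_at)
  then have "\<forall>\<^sub>F p in nhds (a0, s). G p < 0"
    by (intro order_tendstoD(2)[OF _ assms(3)]) (simp add: isCont_def tendsto_at_iff_tendsto_nhds)
  then obtain d where d: "d > 0" "\<And>p. dist p (a0, s) < d \<Longrightarrow> G p < 0"
    unfolding eventually_nhds_metric by blast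
  have "u < v \<longrightarrow> h a v < h a u" if "dist (a, u, v) (a0, s, s) < d / 2" for a u v
  proof
    assume "u < v"
    then obtain z where z: "u < z" "z < v" "h a v - h a u = (v - u) * G (a, z)"
      using MVT2[of u v "h a" "\<lambda>z. G (a, z)"] assms(2) by blast
    have "dist a a0 < d / 2" "dist (u, v) (s, s) < d / 2"
      using that dist_fst_le[of "(a, u, v)" "(a0, s, s)"] dist_snd_le[of "(a, u, v)" "(a0, s, s)"] by auto
    then have "dist a a0 < d / 2" "dist u s < d / 2" "dist v s < d / 2"
      using dist_fst_le[of "(u, v)" "(s, s)"] dist_snd_le[of "(u, v)" "(s, s)"] by auto
    moreover have "dist z s < d / 2"
      using z calculation unfolding dist_real_def abs_less_iff by linarith
    ultimately have "dist (a, z) (a0, s) < d"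
      using dist_Pair_Pair[of a z a0 s] sqrt_sum_squares_le_sum_abs[of "dist a a0" "dist z s"] by simp
    then have "(v - u) * G (a, z) < 0"
      using d(2) \<open>u < v\<close> by (simp add: mult_pos_neg)
    then show "h a v < h a u"
      using z(3) by simp
  qed
  then show ?thesis
    unfolding eventually_nhds_metric using d(1) by (intro exI[of _ "d / 2"]) auto
qed

lemma shifted_zero_below:
  fixes a b z :: real and k :: int
  assumes "-pi \<le> a" "a < b" "b \<le> pi" "-pi \<le> z" "z < a"
    and "z = a + 2 * pi * k \<or> z = b + 2 * pi * k"
  shows "z = b - 2 * pi"
proof -
  have "2 * pi * k < 0"
    using assms by auto
  then have "k \<le> -1"
    by (simp add: mult_less_0_iff)
  then have k: "2 * pi * k \<le> 2 * pi * (-1)"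
    by (intro mult_left_mono) auto
  have "k \<ge> -1"
  proof (rule ccontr)
    assume "\<not> k \<ge> -1"
    then have "2 * pi * k \<le> 2 * pi * (-2)"
      by (intro mult_left_mono) auto
    then show False
      using assms by auto
  qed
  then show ?thesis
    using assms k by auto
qed

lemma descending_zero_le:
  fixes \<phi> \<psi> :: "real \<Rightarrow> real"
  assumes le: "\<And>y. \<phi> y \<le> \<psi> y"
    and periodic: "\<And>y. \<phi> (y + 2 * pi) = \<phi> y"
    and zeros: "\<And>y. \<phi> y = 0 \<longleftrightarrow> (\<exists>k::int. y = a + 2 * pi * k) \<or> (\<exists>k::int. y = b + 2 * pi * k)"
    and order: "-pi \<le> a" "a < b" "b \<le> pi"
    and \<phi>_a: "DERIV \<phi> a :> da" "da < 0"
    and \<phi>_b: "DERIV \<phi> b :> db" "db > 0"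
    and \<phi>_cont: "\<And>y. isCont \<phi> y"
    and \<psi>_s: "\<psi> s = 0" "DERIV \<psi> s :> ds" "ds < 0" "-pi \<le> s"
  shows "a \<le> s"
proof (rule ccontr)
  assume "\<not> a \<le> s"
  then have "s < a" by simp
  have zero_below_a: "z = b - 2 * pi" if "-pi \<le> z" "z < a" "\<phi> z = 0" for z
    using that zeros[of z] order shifted_zero_below[of a b z] by auto
  obtain d where d: "d > 0" "\<And>h. 0 < h \<Longrightarrow> h < d \<Longrightarrow> \<phi> a < \<phi> (a - h)"
    using DERIV_neg_dec_left[OF \<phi>_a] by blast
  define h where "h = min d (a - s) / 2"
  have "0 < h" "h < d" "h < a - s"
    using d(1) \<open>s < a\<close> unfolding h_def by auto
  then have y0: "s < a - h" "a - h < a" "\<phi> (a - h) > 0"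
    using d(2)[of h] zeros[of a] by auto
  have "\<phi> s \<le> 0"
    using le[of s] \<psi>_s(1) by simp
  moreover have "\<not> \<phi> s < 0"
  proof
    assume "\<phi> s < 0"
    then obtain z where z: "s \<le> z" "z \<le> a - h" "\<phi> z = 0"
      using IVT[of \<phi> s 0 "a - h"] y0 \<phi>_cont by force
    then have "z = b - 2 * pi"
      using zero_below_a \<psi>_s(4) y0 by force
    then have "z = s"
      using z(1) order(3) \<psi>_s(4) by linarith
    then show False
      using z(3) \<open>\<phi> s < 0\<close> by simp
  qed
  ultimately have "\<phi> s = 0" by simp
  \<comment> \<open>then s = b - 2 pi = -pi, where \<phi> is increasing and \<psi> decreasing, contradicting \<phi> \<le> \<psi>\<close>
  then have "s = b - 2 * pi"
    using zero_below_a \<psi>_s(4) \<open>s < a\<close> by blast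
  then have "DERIV \<phi> s :> db"
    using DERIV_shift[of \<phi> db s "2 * pi"] \<phi>_b(1) periodic by simp
  then obtain d1 where "d1 > 0" "\<And>e. 0 < e \<Longrightarrow> e < d1 \<Longrightarrow> \<phi> s < \<phi> (s + e)"
    using DERIV_pos_inc_right \<phi>_b(2) by blast
  moreover obtain d2 where "d2 > 0" "\<And>e. 0 < e \<Longrightarrow> e < d2 \<Longrightarrow> \<psi> (s + e) < \<psi> s"
    using DERIV_neg_dec_right[OF \<psi>_s(2,3)] by blast
  ultimately obtain e where "\<phi> s < \<phi> (s + e)" "\<psi> (s + e) < \<psi> s"
    using field_lbound_gt_zero by meson
  then show False
    using le[of "s + e"] \<open>\<phi> s = 0\<close> \<psi>_s(1) by simp
qed

lemma positive_backward_of_linear_bound: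
  fixes w w' :: "real \<Rightarrow> real"
  assumes "a \<le> b"
    and deriv: "\<And>t. a \<le> t \<Longrightarrow> t \<le> b \<Longrightarrow> (w has_real_derivative w' t) (at t)"
    and bound: "\<And>t. a \<le> t \<Longrightarrow> t \<le> b \<Longrightarrow> 0 \<le> w t \<Longrightarrow> w' t \<le> L * w t"
    and "0 < w b"
  shows "0 < w a"
proof (rule ccontr)
  assume "\<not> 0 < w a"
  have cont: "continuous_on {a..b} w"
    using deriv by (auto intro!: continuous_at_imp_continuous_on DERIV_isCont)
  define S where "S = {a..b} \<inter> w -` {..0}"
  have "closed S"
    unfolding S_def by (rule continuous_closed_preimage[OF cont]) auto
  moreover have "a \<in> S" "bdd_above S"
    using \<open>a \<le> b\<close> \<open>\<not> 0 < w a\<close> unfolding S_def by (auto intro: bdd_aboveI[of _ b])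
  ultimately have "Sup S \<in> S"
    using closed_contains_Sup by blast
  define c where "c = Sup S"
  have c: "a \<le> c" "c \<le> b" "w c \<le> 0"
    using \<open>Sup S \<in> S\<close> unfolding S_def c_def by auto
  have above_c: "0 < w t" if "c < t" "t \<le> b" for t
    using that c cSup_upper[OF _ \<open>bdd_above S\<close>, of t] unfolding S_def c_def by force
  have "w c = 0"
  proof -
    obtain z where "c \<le> z" "z \<le> b" "w z = 0"
      using IVT'[of w c 0 b] c \<open>0 < w b\<close> continuous_on_subset[OF cont] by force
    then show ?thesis
      using above_c c(3) by force
  qed
  \<comment> \<open>w e^{-Lt} is nonincreasing on [c, b], yet vanishes at c and is positive at b\<close>
  define v where "v t = w t * exp (- L * t)" for t
  have "v b \<le> v c"
  proof (rule DERIV_nonpos_imp_nonincreasing[OF c(2)])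
    fix t assume t: "c \<le> t" "t \<le> b"
    then have "0 \<le> w t"
      using above_c[of t] \<open>w c = 0\<close> by (cases "t = c") auto
    then have "(w' t - L * w t) * exp (- L * t) \<le> 0"
      using bound[of t] t c by (simp add: mult_nonpos_nonneg)
    moreover have "(v has_real_derivative (w' t - L * w t) * exp (- L * t)) (at t)"
      unfolding v_def using deriv[of t] t c
      by (auto intro!: derivative_eq_intros simp: algebra_simps)
    ultimately show "\<exists>y. (v has_real_derivative y) (at t) \<and> y \<le> 0"
      by blast
  qed
  then show False
    using \<open>w c = 0\<close> \<open>0 < w b\<close> unfolding v_def by (simp add: mult_le_0_iff)
qed

lemma solution_gap_pos_backward:
  fixes x y1 y2 :: "real \<Rightarrow> real" and h1 h2 :: "real \<Rightarrow> real \<Rightarrow> real"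
  assumes h_le: "\<And>t y. h2 (x t) y \<le> h1 (x t) y"
    and lipschitz: "\<And>R. \<exists>B. \<forall>t u v. \<bar>u\<bar> \<le> R \<longrightarrow> \<bar>v\<bar> \<le> R \<longrightarrow> \<bar>h1 (x t) u - h1 (x t) v\<bar> \<le> B * \<bar>u - v\<bar>"
    and y1: "\<And>t. (y1 has_real_derivative h1 (x t) (y1 t)) (at t)"
    and y2: "\<And>t. (y2 has_real_derivative h2 (x t) (y2 t)) (at t)"
    and "y1 t0 < y2 t0" "t \<le> t0"
  shows "y1 t < y2 t"
proof -
  have "compact (y1 ` {t..t0} \<union> y2 ` {t..t0})"
    using y1 y2 by (intro compact_Un compact_continuous_image continuous_at_imp_continuous_on ballI
        DERIV_isCont compact_Icc) auto
  then obtain R where R: "\<And>z. z \<in> y1 ` {t..t0} \<union> y2 ` {t..t0} \<Longrightarrow> \<bar>z\<bar> \<le> R"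
    by (metis bounded_iff compact_imp_bounded real_norm_def)
  obtain B where B: "\<forall>t u v. \<bar>u\<bar> \<le> R \<longrightarrow> \<bar>v\<bar> \<le> R \<longrightarrow> \<bar>h1 (x t) u - h1 (x t) v\<bar> \<le> B * \<bar>u - v\<bar>"
    using lipschitz by blast
  have "0 < y2 t - y1 t"
  proof (rule positive_backward_of_linear_bound[of t t0 "\<lambda>t. y2 t - y1 t"
        "\<lambda>s. h2 (x s) (y2 s) - h1 (x s) (y1 s)" B])
    show "((\<lambda>t. y2 t - y1 t) has_real_derivative h2 (x s) (y2 s) - h1 (x s) (y1 s)) (at s)" for s
      by (intro derivative_intros y1 y2)
    fix s assume s: "t \<le> s" "s \<le> t0" "0 \<le> y2 s - y1 s"
    then have "\<bar>y1 s\<bar> \<le> R" "\<bar>y2 s\<bar> \<le> R"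
      using R by auto
    then have "\<bar>h1 (x s) (y2 s) - h1 (x s) (y1 s)\<bar> \<le> B * \<bar>y2 s - y1 s\<bar>"
      using B by blast
    then show "h2 (x s) (y2 s) - h1 (x s) (y1 s) \<le> B * (y2 s - y1 s)"
      using h_le[of s "y2 s"] s(3) by simp
  qed (use \<open>t \<le> t0\<close> \<open>y1 t0 < y2 t0\<close> in simp_all)
  then show ?thesis
    by simp
qed

lemma asymptotic_comparison_at_bot:
  fixes x y1 y2 :: "real \<Rightarrow> real" and h1 h2 :: "real \<Rightarrow> real \<Rightarrow> real"
  assumes h_le: "\<And>t y. h2 (x t) y \<le> h1 (x t) y"
    and lipschitz: "\<And>R. \<exists>B. \<forall>t u v. \<bar>u\<bar> \<le> R \<longrightarrow> \<bar>v\<bar> \<le> R \<longrightarrow> \<bar>h1 (x t) u - h1 (x t) v\<bar> \<le> B * \<bar>u - v\<bar>"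
    and y1: "\<And>t. (y1 has_real_derivative h1 (x t) (y1 t)) (at t)"
    and y2: "\<And>t. (y2 has_real_derivative h2 (x t) (y2 t)) (at t)"
    and lim: "(x \<longlongrightarrow> x0) at_bot" "(y1 \<longlongrightarrow> s1) at_bot" "(y2 \<longlongrightarrow> s2) at_bot" "s2 \<le> s1"
    and decreasing: "\<forall>\<^sub>F (a, u, v) in nhds (x0, s1, s1). u < v \<longrightarrow> h1 a v < h1 a u"
  shows "y2 t0 \<le> y1 t0"
proof (rule ccontr)
  assume "\<not> y2 t0 \<le> y1 t0"
  then have gap: "y1 t < y2 t" if "t \<le> t0" for t
    using solution_gap_pos_backward[where x = x and ?h1.0 = h1 and ?h2.0 = h2, OF h_le lipschitz y1 y2] that
    by (meson not_le)
  define w where "w t = y2 t - y1 t" for t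
  have w_lim: "(w \<longlongrightarrow> s2 - s1) at_bot"
    unfolding w_def by (intro tendsto_intros lim)
  have w_nonneg: "\<forall>\<^sub>F t in at_bot. 0 \<le> w t"
    using eventually_le_at_bot[of t0] by eventually_elim (simp add: w_def gap less_imp_le)
  have "s1 = s2"
    using tendsto_lowerbound[OF w_lim w_nonneg] lim(4) by simp
  \<comment> \<open>near the limit point h1 decreases in y, so the positive gap w shrinks as t increases;
      it can then not tend to 0 as t goes to -\<infinity>\<close>
  have triple_lim: "((\<lambda>t. (x t, y1 t, y2 t)) \<longlongrightarrow> (x0, s1, s1)) at_bot"
    using lim \<open>s1 = s2\<close> by (intro tendsto_Pair) auto
  have "\<forall>\<^sub>F t in at_bot. y1 t < y2 t \<longrightarrow> h1 (x t) (y2 t) < h1 (x t) (y1 t)"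
    using eventually_compose_filterlim[OF decreasing triple_lim] by simp
  then have "\<forall>\<^sub>F t in at_bot. h2 (x t) (y2 t) - h1 (x t) (y1 t) < 0 \<and> t \<le> t0"
    using eventually_le_at_bot[of t0]
  proof eventually_elim
    case (elim t)
    then show ?case
      using gap[of t] h_le[of t "y2 t"] by auto
  qed
  then obtain T where T: "\<And>t. t \<le> T \<Longrightarrow> h2 (x t) (y2 t) - h1 (x t) (y1 t) < 0 \<and> t \<le> t0"
    unfolding eventually_at_bot_linorder by blast
  have w_above: "\<forall>\<^sub>F t in at_bot. w T \<le> w t"
    using eventually_le_at_bot[of T]
  proof eventually_elim
    case (elim t)
    show ?case
    proof (rule DERIV_nonpos_imp_nonincreasing[OF elim])
      fix r assume "t \<le> r" "r \<le> T"
      moreover have "(w has_real_derivative h2 (x r) (y2 r) - h1 (x r) (y1 r)) (at r)"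
        unfolding w_def by (intro derivative_intros y1 y2)
      ultimately show "\<exists>d. (w has_real_derivative d) (at r) \<and> d \<le> 0"
        using T[of r] by (intro exI[of _ "h2 (x r) (y2 r) - h1 (x r) (y1 r)"]) auto
    qed
  qed
  have "w T \<le> 0"
    using tendsto_lowerbound[OF w_lim w_above] \<open>s1 = s2\<close> by simp
  then show False
    using gap T[of T] unfolding w_def by force
qed

lemma alpha_orbits_antitone:
  fixes g :: "real \<Rightarrow> real \<Rightarrow> real \<Rightarrow> real" and G :: "real \<Rightarrow> real \<times> real \<Rightarrow> real"
    and x y1 y2 s n :: "real \<Rightarrow> real"
  assumes G_cont: "\<And>\<mu>. \<mu> \<in> I \<Longrightarrow> continuous_on UNIV (G \<mu>)"
    and G_deriv: "\<And>\<mu> a y. \<mu> \<in> I \<Longrightarrow> (g \<mu> a has_real_derivative G \<mu> (a, y)) (at y)"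
    and g_antimono: "\<And>\<mu>1 \<mu>2 a y. \<mu>1 \<in> I \<Longrightarrow> \<mu>2 \<in> I \<Longrightarrow> \<mu>1 \<le> \<mu>2 \<Longrightarrow> a \<in> X \<Longrightarrow> g \<mu>2 a y \<le> g \<mu>1 a y"
    and g_periodic: "\<And>\<mu> y. \<mu> \<in> I \<Longrightarrow> g \<mu> xb (y + 2 * pi) = g \<mu> xb y"
    and zeros: "\<And>\<mu> y. \<mu> \<in> I \<Longrightarrow> g \<mu> xb y = 0 \<longleftrightarrow>
                  (\<exists>k::int. y = s \<mu> + 2 * pi * k) \<or> (\<exists>k::int. y = n \<mu> + 2 * pi * k)"
    and order: "\<And>\<mu>. \<mu> \<in> I \<Longrightarrow> - pi \<le> s \<mu> \<and> s \<mu> < n \<mu> \<and> n \<mu> \<le> pi"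
    and signs: "\<And>\<mu>. \<mu> \<in> I \<Longrightarrow> G \<mu> (xb, s \<mu>) < 0 \<and> G \<mu> (xb, n \<mu>) > 0"
    and X: "compact X" "xb \<in> X"
    and x: "continuous_on UNIV x" "\<And>t. x t \<in> X"
    and \<mu>: "\<mu>1 \<in> I" "\<mu>2 \<in> I" "\<mu>1 \<le> \<mu>2"
    and y1: "\<And>t. (y1 has_real_derivative g \<mu>1 (x t) (y1 t)) (at t)"
      "alpha_limit (\<lambda>t. (x t, y1 t)) = {(xb, s \<mu>1)}"
    and y2: "\<And>t. (y2 has_real_derivative g \<mu>2 (x t) (y2 t)) (at t)"
      "alpha_limit (\<lambda>t. (x t, y2 t)) = {(xb, s \<mu>2)}"
  shows "y2 t \<le> y1 t"
proof -
  have y_cont: "continuous_on UNIV y1" "continuous_on UNIV y2"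
    using y1(1) y2(1) by (auto intro!: continuous_at_imp_continuous_on DERIV_isCont)
  have "((\<lambda>t. (x t, y1 t)) \<longlongrightarrow> (xb, s \<mu>1)) at_bot" "((\<lambda>t. (x t, y2 t)) \<longlongrightarrow> (xb, s \<mu>2)) at_bot"
    using alpha_limit_singleton_imp_tendsto[OF continuous_on_Pair[OF x(1) y_cont(1)] y1(2)]
      alpha_limit_singleton_imp_tendsto[OF continuous_on_Pair[OF x(1) y_cont(2)] y2(2)] by auto
  then have lim: "(x \<longlongrightarrow> xb) at_bot" "(y1 \<longlongrightarrow> s \<mu>1) at_bot" "(y2 \<longlongrightarrow> s \<mu>2) at_bot"
    by (auto dest: tendsto_fst tendsto_snd)
  have "s \<mu>2 \<le> s \<mu>1"
  proof (rule descending_zero_le[of "g \<mu>2 xb" "g \<mu>1 xb"])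
    show "DERIV (g \<mu>2 xb) (s \<mu>2) :> G \<mu>2 (xb, s \<mu>2)" "DERIV (g \<mu>2 xb) (n \<mu>2) :> G \<mu>2 (xb, n \<mu>2)"
      "DERIV (g \<mu>1 xb) (s \<mu>1) :> G \<mu>1 (xb, s \<mu>1)"
      using G_deriv \<mu> by auto
    show "isCont (g \<mu>2 xb) y" for y
      using G_deriv[OF \<mu>(2)] by (rule DERIV_isCont)
    show "g \<mu>1 xb (s \<mu>1) = 0"
      using zeros[OF \<mu>(1), of "s \<mu>1"] by (auto intro: exI[of _ 0])
  qed (use g_antimono g_periodic zeros order signs X(2) \<mu> in auto)
  show ?thesis
  proof (rule asymptotic_comparison_at_bot[of "g \<mu>2" x "g \<mu>1" y1 y2 xb "s \<mu>1" "s \<mu>2"])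
    show "\<exists>B. \<forall>t u v. \<bar>u\<bar> \<le> R \<longrightarrow> \<bar>v\<bar> \<le> R \<longrightarrow> \<bar>g \<mu>1 (x t) u - g \<mu>1 (x t) v\<bar> \<le> B * \<bar>u - v\<bar>" for R
      using uniform_lipschitz_of_continuous_partial_derivative[OF G_cont G_deriv X(1), of \<mu>1 R] \<mu>(1) x(2)
      by metis
    show "\<forall>\<^sub>F (a, u, v) in nhds (xb, s \<mu>1, s \<mu>1). u < v \<longrightarrow> g \<mu>1 a v < g \<mu>1 a u"
      using strict_antimono_near_negative_partial_derivative[OF G_cont G_deriv] signs \<mu>(1) by blast
  qed (use g_antimono x(2) \<mu> y1(1) y2(1) lim \<open>s \<mu>2 \<le> s \<mu>1\<close> in auto)
qed

lemma omega_orbits_monotone: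
  fixes g :: "real \<Rightarrow> real \<Rightarrow> real \<Rightarrow> real" and G :: "real \<Rightarrow> real \<times> real \<Rightarrow> real"
    and x y1 y2 s n :: "real \<Rightarrow> real"
  assumes G_cont: "\<And>\<mu>. \<mu> \<in> I \<Longrightarrow> continuous_on UNIV (G \<mu>)"
    and G_deriv: "\<And>\<mu> a y. \<mu> \<in> I \<Longrightarrow> (g \<mu> a has_real_derivative G \<mu> (a, y)) (at y)"
    and g_antimono: "\<And>\<mu>1 \<mu>2 a y. \<mu>1 \<in> I \<Longrightarrow> \<mu>2 \<in> I \<Longrightarrow> \<mu>1 \<le> \<mu>2 \<Longrightarrow> a \<in> X \<Longrightarrow> g \<mu>2 a y \<le> g \<mu>1 a y"
    and g_periodic: "\<And>\<mu> y. \<mu> \<in> I \<Longrightarrow> g \<mu> xb (y + 2 * pi) = g \<mu> xb y"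
    and zeros: "\<And>\<mu> y. \<mu> \<in> I \<Longrightarrow> g \<mu> xb y = 0 \<longleftrightarrow>
                  (\<exists>k::int. y = s \<mu> + 2 * pi * k) \<or> (\<exists>k::int. y = n \<mu> + 2 * pi * k)"
    and order: "\<And>\<mu>. \<mu> \<in> I \<Longrightarrow> - pi \<le> s \<mu> \<and> s \<mu> < n \<mu> \<and> n \<mu> \<le> pi"
    and signs: "\<And>\<mu>. \<mu> \<in> I \<Longrightarrow> G \<mu> (xb, s \<mu>) > 0 \<and> G \<mu> (xb, n \<mu>) < 0"
    and X: "compact X" "xb \<in> X"
    and x: "continuous_on UNIV x" "\<And>t. x t \<in> X"
    and \<mu>: "\<mu>1 \<in> I" "\<mu>2 \<in> I" "\<mu>1 \<le> \<mu>2"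
    and y1: "\<And>t. (y1 has_real_derivative g \<mu>1 (x t) (y1 t)) (at t)"
      "omega_limit (\<lambda>t. (x t, y1 t)) = {(xb, s \<mu>1)}"
    and y2: "\<And>t. (y2 has_real_derivative g \<mu>2 (x t) (y2 t)) (at t)"
      "omega_limit (\<lambda>t. (x t, y2 t)) = {(xb, s \<mu>2)}"
  shows "y1 t \<le> y2 t"
proof -
  have y_rev: "((\<lambda>t. y1 (- t)) has_real_derivative - g (- (- \<mu>1)) (x (- t)) (y1 (- t))) (at t)"
    "((\<lambda>t. y2 (- t)) has_real_derivative - g (- (- \<mu>2)) (x (- t)) (y2 (- t))) (at t)" for t
    using y1(1) y2(1) by (simp_all add: DERIV_mirror[symmetric])
  have alpha_rev: "alpha_limit (\<lambda>t. (x (- t), y1 (- t))) = {(xb, s (- (- \<mu>1)))}"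
    "alpha_limit (\<lambda>t. (x (- t), y2 (- t))) = {(xb, s (- (- \<mu>2)))}"
    using y1(2) y2(2) by (simp_all add: alpha_limit_reflect)
  have G_neg: "continuous_on UNIV (\<lambda>p. - G \<mu> p)" "((\<lambda>y. - g \<mu> a y) has_real_derivative - G \<mu> (a, y)) (at y)"
    if "\<mu> \<in> I" for \<mu> a y
    using G_cont[OF that] G_deriv[OF that] by (auto intro!: continuous_intros derivative_intros)
  have x_rev: "continuous_on UNIV (\<lambda>t. x (- t))"
    by (intro continuous_on_compose2[OF x(1)] continuous_intros) auto
  have "y1 (- (- t)) \<le> y2 (- (- t))"
    by (rule alpha_orbits_antitone[where g = "\<lambda>\<mu> a y. - g (- \<mu>) a y" and G = "\<lambda>\<mu> p. - G (- \<mu>) p"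
          and I = "uminus ` I" and X = X and xb = xb and s = "\<lambda>\<mu>. s (- \<mu>)" and n = "\<lambda>\<mu>. n (- \<mu>)"
          and x = "\<lambda>t. x (- t)" and ?\<mu>1.0 = "- \<mu>2" and ?\<mu>2.0 = "- \<mu>1"
          and ?y1.0 = "\<lambda>t. y2 (- t)" and ?y2.0 = "\<lambda>t. y1 (- t)" and t = "- t"])
      (use G_neg g_antimono g_periodic zeros order signs X x \<mu> y_rev alpha_rev x_rev in auto)
  then show ?thesis
    by simp
qed

theorem lemma1:
  fixes xm xp :: real
    and f :: "real \<Rightarrow> real"
    and g :: "real \<Rightarrow> real \<Rightarrow> real \<Rightarrow> real"  \<comment> \<open>g \<mu> x y\<close>
    and I :: "real set"
    and sm nm sp np :: "real \<Rightarrow> real"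
    and x :: "real \<Rightarrow> real"
  assumes xm_xp: "xm < xp"
    and I_interval: "open I" "is_interval I" "I \<noteq> {}"
    and f_smooth: "smooth_on UNIV f"
    and g_smooth: "\<And>\<mu>. \<mu> \<in> I \<Longrightarrow> smooth_on UNIV (\<lambda>p::real \<times> real. g \<mu> (fst p) (snd p))"
    and g_C1: "C1_on (I \<times> UNIV) (\<lambda>q::real \<times> real \<times> real. g (fst q) (fst (snd q)) (snd (snd q)))"
    and g_periodic: "\<And>\<mu> x y. \<mu> \<in> I \<Longrightarrow> g \<mu> x (y + 2 * pi) = g \<mu> x y"
    and f_bd: "f xm = 0" "f xp = 0"
    and f_pos: "\<And>z. xm < z \<Longrightarrow> z < xp \<Longrightarrow> f z > 0"
    and f_deriv: "deriv f xm \<ge> 0" "deriv f xp \<le> 0"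
    and zeros_m: "\<And>\<mu> y. \<mu> \<in> I \<Longrightarrow> g \<mu> xm y = 0 \<longleftrightarrow>
                    (\<exists>k::int. y = sm \<mu> + 2 * pi * k) \<or> (\<exists>k::int. y = nm \<mu> + 2 * pi * k)"
    and zeros_p: "\<And>\<mu> y. \<mu> \<in> I \<Longrightarrow> g \<mu> xp y = 0 \<longleftrightarrow>
                    (\<exists>k::int. y = sp \<mu> + 2 * pi * k) \<or> (\<exists>k::int. y = np \<mu> + 2 * pi * k)"
    and order_m: "\<And>\<mu>. \<mu> \<in> I \<Longrightarrow> - pi \<le> sm \<mu> \<and> sm \<mu> < nm \<mu> \<and> nm \<mu> \<le> pi"
    and order_p: "\<And>\<mu>. \<mu> \<in> I \<Longrightarrow> - pi \<le> sp \<mu> \<and> sp \<mu> < np \<mu> \<and> np \<mu> \<le> pi"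
    and hyp_m: "\<And>\<mu>. \<mu> \<in> I \<Longrightarrow> deriv (\<lambda>y. g \<mu> xm y) (nm \<mu>) > 0 \<and> deriv (\<lambda>y. g \<mu> xm y) (sm \<mu>) < 0"
    and hyp_p: "\<And>\<mu>. \<mu> \<in> I \<Longrightarrow> deriv (\<lambda>y. g \<mu> xp y) (np \<mu>) < 0 \<and> deriv (\<lambda>y. g \<mu> xp y) (sp \<mu>) > 0"
    and twist: "\<And>\<mu>. \<mu> \<in> I \<Longrightarrow> \<exists>k::int. sm \<mu> - nm \<mu> = np \<mu> - sp \<mu> + 2 * pi * k"
    and nonwand: "\<And>\<mu> p. \<mu> \<in> I \<Longrightarrow>
        nonwandering (\<lambda>q::real \<times> real. (f (fst q), g \<mu> (fst q) (snd q))) ({xm..xp} \<times> UNIV) p \<Longrightarrow>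
        \<exists>k::int. p = (xm, sm \<mu> + 2 * pi * k) \<or> p = (xm, nm \<mu> + 2 * pi * k)
               \<or> p = (xp, sp \<mu> + 2 * pi * k) \<or> p = (xp, np \<mu> + 2 * pi * k)"
    and monotone_M: "\<And>\<mu> x y. \<mu> \<in> I \<Longrightarrow> xm \<le> x \<Longrightarrow> x \<le> xp \<Longrightarrow> deriv (\<lambda>m. g m x y) \<mu> \<le> 0"
    and x_sol: "\<And>\<tau>. (x has_real_derivative f (x \<tau>)) (at \<tau>)"
    and x_range: "\<And>\<tau>. xm < x \<tau> \<and> x \<tau> < xp"
  shows "(\<forall>\<mu>1\<in>I. \<forall>\<mu>2\<in>I. \<forall>y1 y2. \<mu>1 < \<mu>2
            \<and> (\<forall>\<tau>. (y1 has_real_derivative g \<mu>1 (x \<tau>) (y1 \<tau>)) (at \<tau>))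
            \<and> alpha_limit (\<lambda>\<tau>. (x \<tau>, y1 \<tau>)) = {(xm, sm \<mu>1)}
            \<and> (\<forall>\<tau>. (y2 has_real_derivative g \<mu>2 (x \<tau>) (y2 \<tau>)) (at \<tau>))
            \<and> alpha_limit (\<lambda>\<tau>. (x \<tau>, y2 \<tau>)) = {(xm, sm \<mu>2)}
          \<longrightarrow> (\<forall>\<tau>. y1 \<tau> \<ge> y2 \<tau>))
       \<and> (\<forall>\<mu>1\<in>I. \<forall>\<mu>2\<in>I. \<forall>y1 y2. \<mu>1 < \<mu>2
            \<and> (\<forall>\<tau>. (y1 has_real_derivative g \<mu>1 (x \<tau>) (y1 \<tau>)) (at \<tau>))
            \<and> omega_limit (\<lambda>\<tau>. (x \<tau>, y1 \<tau>)) = {(xp, sp \<mu>1)}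
            \<and> (\<forall>\<tau>. (y2 has_real_derivative g \<mu>2 (x \<tau>) (y2 \<tau>)) (at \<tau>))
            \<and> omega_limit (\<lambda>\<tau>. (x \<tau>, y2 \<tau>)) = {(xp, sp \<mu>2)}
          \<longrightarrow> (\<forall>\<tau>. y1 \<tau> \<le> y2 \<tau>))"
proof -
  have "\<forall>\<mu>\<in>I. \<exists>G. continuous_on UNIV G \<and> (\<forall>a y. (g \<mu> a has_real_derivative G (a, y)) (at y))"
    using smooth_on_partial_derivative_snd[OF g_smooth] by metis
  then obtain G where G_cont: "\<And>\<mu>. \<mu> \<in> I \<Longrightarrow> continuous_on UNIV (G \<mu>)"
    and G_deriv: "\<And>\<mu> a y. \<mu> \<in> I \<Longrightarrow> (g \<mu> a has_real_derivative G \<mu> (a, y)) (at y)"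
    by metis
  have signs_m: "G \<mu> (xm, sm \<mu>) < 0 \<and> G \<mu> (xm, nm \<mu>) > 0"
    and signs_p: "G \<mu> (xp, sp \<mu>) > 0 \<and> G \<mu> (xp, np \<mu>) < 0" if "\<mu> \<in> I" for \<mu>
    using hyp_m[OF that] hyp_p[OF that] DERIV_imp_deriv[OF G_deriv[OF that]] by auto
  have g_antimono: "g \<mu>2 a y \<le> g \<mu>1 a y"
    if "\<mu>1 \<in> I" "\<mu>2 \<in> I" "\<mu>1 \<le> \<mu>2" "a \<in> {xm..xp}" for \<mu>1 \<mu>2 a y
    using antimono_param_of_deriv_nonpos[OF g_C1 I_interval(2)] monotone_M that by auto
  have x_cont: "continuous_on UNIV x"
    using x_sol by (auto intro!: continuous_at_imp_continuous_on DERIV_isCont)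
  have x_in: "x t \<in> {xm..xp}" for t
    using x_range[of t] by auto
  have X: "compact {xm..xp}" "xm \<in> {xm..xp}" "xp \<in> {xm..xp}"
    using xm_xp by auto
  have alpha: "y2 \<tau> \<le> y1 \<tau>"
    if "\<mu>1 \<in> I" "\<mu>2 \<in> I" "\<mu>1 < \<mu>2"
      "\<forall>\<tau>. (y1 has_real_derivative g \<mu>1 (x \<tau>) (y1 \<tau>)) (at \<tau>)" "alpha_limit (\<lambda>\<tau>. (x \<tau>, y1 \<tau>)) = {(xm, sm \<mu>1)}"
      "\<forall>\<tau>. (y2 has_real_derivative g \<mu>2 (x \<tau>) (y2 \<tau>)) (at \<tau>)" "alpha_limit (\<lambda>\<tau>. (x \<tau>, y2 \<tau>)) = {(xm, sm \<mu>2)}"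
    for \<mu>1 \<mu>2 y1 y2 \<tau>
    using alpha_orbits_antitone[OF G_cont G_deriv g_antimono g_periodic zeros_m order_m signs_m X(1,2) x_cont x_in]
      that by (simp add: less_imp_le)
  have omega: "y1 \<tau> \<le> y2 \<tau>"
    if "\<mu>1 \<in> I" "\<mu>2 \<in> I" "\<mu>1 < \<mu>2"
      "\<forall>\<tau>. (y1 has_real_derivative g \<mu>1 (x \<tau>) (y1 \<tau>)) (at \<tau>)" "omega_limit (\<lambda>\<tau>. (x \<tau>, y1 \<tau>)) = {(xp, sp \<mu>1)}"
      "\<forall>\<tau>. (y2 has_real_derivative g \<mu>2 (x \<tau>) (y2 \<tau>)) (at \<tau>)" "omega_limit (\<lambda>\<tau>. (x \<tau>, y2 \<tau>)) = {(xp, sp \<mu>2)}"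
    for \<mu>1 \<mu>2 y1 y2 \<tau>
    using omega_orbits_monotone[OF G_cont G_deriv g_antimono g_periodic zeros_p order_p signs_p X(1,3) x_cont x_in]
      that by (simp add: less_imp_le)
  show ?thesis
    using alpha omega by blast
qed

end
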